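(* For every integer $n \geq 1$, the number $R(n)$ of Riordan paths of length $n$ satisfies $$R(n) = \sum_{k=1}^{\lfloor n/2 \rfloor} f^{(k,k,1^{n-2k})}.$$
   Context: A Motzkin path of length $n$ is a lattice path from $(0,0)$ to $(n,0)$ using steps $U=(1,1)$, $F=(1,0)$, $D=(1,-1)$ that never goes below the $x$-axis. A Riordan path is a Motzkin path with no flat step $F$ on the $x$-axis. $R(n)$ is the number of Riordan paths of length $n$ (the Riordan numbers). $f^\mu$ denotes the number of standard Young tableaux of shape $\mu$, and $(k,k,1^{j})$ is the partition with two parts equal to $k$ followed by $j$ parts equal to $1$. *)

theory Defs
  imports Main
begin

datatype step = U | F | D

fun step_val :: "step \<Rightarrow> int" where
  "step_val U = 1" | "step_val F = 0" | "step_val D = -1"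

definition height :: "step list \<Rightarrow> nat \<Rightarrow> int" where
  "height p i = (\<Sum>j<i. step_val (p ! j))"

definition motzkin_path :: "step list \<Rightarrow> bool" where
  "motzkin_path p \<longleftrightarrow> (\<forall>i\<le>length p. height p i \<ge> 0) \<and> height p (length p) = 0"

text \<open>Riordan path: Motzkin path with no flat step on the x-axis
  (a flat step lies on the axis iff it starts at height 0).\<close>
definition riordan_path :: "step list \<Rightarrow> bool" where
  "riordan_path p \<longleftrightarrow> motzkin_path p \<and>
     (\<forall>i<length p. p ! i = F \<longrightarrow> height p i \<noteq> 0)"

definition riordan_num :: "nat \<Rightarrow> nat" where
  "riordan_num n = card {p. length p = n \<and> riordan_path p}"

definition young_diagram :: "nat list \<Rightarrow> (nat \<times> nat) set" where
  "young_diagram mu = {(i, j). i < length mu \<and> j < mu ! i}"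

definition syt :: "nat list \<Rightarrow> ((nat \<times> nat) \<Rightarrow> nat) \<Rightarrow> bool" where
  "syt mu T \<longleftrightarrow>
     bij_betw T (young_diagram mu) {1..sum_list mu} \<and>
     (\<forall>c. c \<notin> young_diagram mu \<longrightarrow> T c = 0) \<and>
     (\<forall>i j. (i, Suc j) \<in> young_diagram mu \<longrightarrow> T (i, j) < T (i, Suc j)) \<and>
     (\<forall>i j. (Suc i, j) \<in> young_diagram mu \<longrightarrow> T (i, j) < T (Suc i, j))"

definition num_syt :: "nat list \<Rightarrow> nat" where
  "num_syt mu = card {T. syt mu T}"

end

theory Submission
  imports Defs
begin

(* The largest entry of a standard Young tableau sits at a corner of its shape, and deleting
   it gives the branching rule: f^mu is the sum of f^mu' over the shapes mu' obtained by
   removing one corner. For the shapes (b+h, b, 1^j) this shows that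
   S(m, h) = sum over b >= 1 of f^(b+h, b, 1^(m-h-2b)) satisfies
     S(m+1, h) = S(m, h-1) + S(m, h+1) + S(m, h) + [m = h+1]      (S(m, -1) = 0).
   On the path side, let P(m, h) count the paths of length m from height h down to the axis
   that never go below it and have no flat step on it. Splitting off the first step gives
     P(m+1, h) = P(m, h+1) + [h > 0] (P(m, h) + P(m, h-1)),
   and the two recurrences yield P(m, h) = [m = h] + S(m, h) + S(m, h-1) by induction on m.
   Hence R(n) = P(n, 0) = S(n, 0) for n >= 1. *)

lemma young_diagram_iff: "(i, j) \<in> young_diagram mu \<longleftrightarrow> i < length mu \<and> j < mu ! i"
  unfolding young_diagram_def by simp

lemma finite_young_diagram: "finite (young_diagram mu)"
proof (rule finite_subset)
  show "young_diagram mu \<subseteq> {..<length mu} \<times> {..<sum_list mu}"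
    using elem_le_sum_list by (fastforce simp: young_diagram_iff)
qed auto

lemma syt_outside: "syt mu T \<Longrightarrow> c \<notin> young_diagram mu \<Longrightarrow> T c = 0"
  unfolding syt_def by blast

lemma finite_syt: "finite {T. syt mu T}"
proof (rule finite_subset)
  show "{T. syt mu T} \<subseteq> {f. \<forall>x. (x \<in> young_diagram mu \<longrightarrow> f x \<in> {1..sum_list mu})
                                  \<and> (x \<notin> young_diagram mu \<longrightarrow> f x = 0)}"
    unfolding syt_def bij_betw_def by auto
qed (rule finite_set_of_finite_funs[OF finite_young_diagram], simp)

lemma syt_le_sum_list:
  assumes "syt mu T"
  shows "T c \<le> sum_list mu"
proof (cases "c \<in> young_diagram mu")
  case True
  then show ?thesis
    using assms unfolding syt_def bij_betw_def by auto
next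
  case False
  then show ?thesis
    using syt_outside[OF assms] by simp
qed

lemma syt_max_at_corner:
  assumes "syt mu T" "T (i, j) = sum_list mu"
  shows "(i, Suc j) \<notin> young_diagram mu" "(Suc i, j) \<notin> young_diagram mu"
  using assms syt_le_sum_list[OF assms(1)] unfolding syt_def by (metis leD)+

lemma young_diagram_shorten_row:
  assumes "i < length mu" "0 < mu ! i"
  shows "young_diagram (mu[i := mu ! i - 1]) = young_diagram mu - {(i, mu ! i - 1)}"
  using assms unfolding young_diagram_def by (auto simp: nth_list_update split: if_splits)

lemma sum_list_shorten_row:
  fixes mu :: "nat list"
  assumes "i < length mu" "0 < mu ! i"
  shows "sum_list (mu[i := mu ! i - 1]) = sum_list mu - 1"
proof -
  have "sum_list (mu[i := mu ! i - 1]) + mu ! i = sum_list mu + (mu ! i - 1)"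
    using assms(1)
  proof (induction mu arbitrary: i)
    case (Cons a mu)
    then show ?case by (cases i) auto
  qed simp
  then show ?thesis
    using assms(2) by simp
qed

lemma bij_betw_remove_max:
  fixes T :: "'a \<Rightarrow> nat"
  assumes "c \<in> Y" "T c = N" "1 \<le> N"
  shows "bij_betw T Y {1..N} \<longleftrightarrow> bij_betw T (Y - {c}) {1..N - 1}"
proof -
  have "Y = (Y - {c}) \<union> {c}"
    using assms(1) by auto
  moreover have "{1..N} = {1..N - 1} \<union> {T c}" "T c \<notin> {1..N - 1}"
    using assms(3) unfolding assms(2) by auto
  ultimately show ?thesis
    by (metis notIn_Un_bij_betw3 Diff_iff singletonI)
qed

lemma syt_remove_last_cell:
  assumes syt: "syt mu T" and i: "i < length mu" "0 < mu ! i"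
    and max: "T (i, mu ! i - 1) = sum_list mu"
  shows "syt (mu[i := mu ! i - 1]) (T((i, mu ! i - 1) := 0))"
proof -
  define c where "c = (i, mu ! i - 1)"
  define Y where "Y = young_diagram mu"
  define T' where "T' = T(c := 0)"
  have Y': "young_diagram (mu[i := mu ! i - 1]) = Y - {c}"
    unfolding Y_def c_def using young_diagram_shorten_row[OF i] .
  have "c \<in> Y" "1 \<le> sum_list mu"
    using i elem_le_sum_list[OF i(1)] unfolding c_def Y_def by (auto simp: young_diagram_iff)
  moreover have "bij_betw T Y {1..sum_list mu}"
    using syt unfolding syt_def Y_def by blast
  ultimately have "bij_betw T (Y - {c}) {1..sum_list mu - 1}"
    using bij_betw_remove_max[of c Y T "sum_list mu"] max unfolding c_def by blast
  then have bij: "bij_betw T' (Y - {c}) {1..sum_list mu - 1}"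
    unfolding T'_def by (rule bij_betw_cong[THEN iffD1, rotated]) simp
  have out: "T' d = 0" if "d \<notin> Y - {c}" for d
    using syt_outside[OF syt, of d] that unfolding T'_def Y_def by auto
  have mono: "T' d < T' d'" if "T d < T d'" "d' \<in> Y - {c}" for d d'
    using that unfolding T'_def by auto
  have "syt (mu[i := mu ! i - 1]) T'"
    unfolding syt_def Y' sum_list_shorten_row[OF i]
  proof (intro conjI allI impI bij out)
    fix a b
    show "T' (a, b) < T' (a, Suc b)" if "(a, Suc b) \<in> Y - {c}"
      using that syt mono unfolding syt_def Y_def by blast
    show "T' (a, b) < T' (Suc a, b)" if "(Suc a, b) \<in> Y - {c}"
      using that syt mono unfolding syt_def Y_def by blast
  qed
  then show ?thesis
    unfolding T'_def c_def .
qed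

lemma syt_add_corner:
  assumes syt: "syt (mu[i := mu ! i - 1]) T" and i: "i < length mu" "0 < mu ! i"
    and corner: "(Suc i, mu ! i - 1) \<notin> young_diagram mu"
  shows "syt mu (T((i, mu ! i - 1) := sum_list mu))"
proof -
  define c where "c = (i, mu ! i - 1)"
  define Y where "Y = young_diagram mu"
  define N where "N = sum_list mu"
  define T' where "T' = T(c := N)"
  have Y': "young_diagram (mu[i := mu ! i - 1]) = Y - {c}"
    unfolding Y_def c_def using young_diagram_shorten_row[OF i] .
  have N': "sum_list (mu[i := mu ! i - 1]) = N - 1"
    unfolding N_def using sum_list_shorten_row[OF i] .
  have "c \<in> Y" "1 \<le> N"
    using i elem_le_sum_list[OF i(1)] unfolding c_def Y_def N_def by (auto simp: young_diagram_iff)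
  have "bij_betw T (Y - {c}) {1..N - 1}"
    using syt unfolding syt_def Y' N' by blast
  then have "bij_betw T' (Y - {c}) {1..N - 1}"
    unfolding T'_def by (rule bij_betw_cong[THEN iffD1, rotated]) simp
  then have bij: "bij_betw T' Y {1..N}"
    using bij_betw_remove_max[of c Y T' N] \<open>c \<in> Y\<close> \<open>1 \<le> N\<close> unfolding T'_def by simp
  have below_max: "T d < N" for d
    using syt_le_sum_list[OF syt, of d] \<open>1 \<le> N\<close> unfolding N' by simp
  have out: "T' d = 0" if "d \<notin> Y" for d
    using syt_outside[OF syt, of d] that \<open>c \<in> Y\<close> unfolding T'_def Y' by auto
  have less: "T' d < T' d'" if "d \<noteq> c" "d' = c \<or> T d < T d'" for d d'
    using that below_max[of d] unfolding T'_def by auto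
  have "syt mu T'"
    unfolding syt_def Y_def[symmetric] N_def[symmetric]
  proof (intro conjI allI impI bij out)
    fix a b
    show "T' (a, b) < T' (a, Suc b)" if "(a, Suc b) \<in> Y"
    proof (rule less)
      show "(a, b) \<noteq> c"
        using that unfolding Y_def c_def by (auto simp: young_diagram_iff)
      show "(a, Suc b) = c \<or> T (a, b) < T (a, Suc b)"
        using syt that unfolding syt_def Y' by blast
    qed
    show "T' (a, b) < T' (Suc a, b)" if "(Suc a, b) \<in> Y"
    proof (rule less)
      show "(a, b) \<noteq> c"
        using that corner unfolding Y_def c_def by (auto simp: young_diagram_iff)
      show "(Suc a, b) = c \<or> T (a, b) < T (Suc a, b)"
        using syt that unfolding syt_def Y' by blast
    qed
  qed
  then show ?thesis
    unfolding T'_def c_def N_def .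
qed

lemma card_syt_max_at_corner:
  assumes i: "i < length mu" "0 < mu ! i" and corner: "(Suc i, mu ! i - 1) \<notin> young_diagram mu"
  shows "card {T. syt mu T \<and> T (i, mu ! i - 1) = sum_list mu} = num_syt (mu[i := mu ! i - 1])"
proof -
  define c where "c = (i, mu ! i - 1)"
  have c_out: "c \<notin> young_diagram (mu[i := mu ! i - 1])"
    using young_diagram_shorten_row[OF i] unfolding c_def by simp
  have "bij_betw (\<lambda>T. T(c := sum_list mu)) {T. syt (mu[i := mu ! i - 1]) T}
               {T. syt mu T \<and> T c = sum_list mu}"
  proof (rule bij_betw_byWitness[where f' = "\<lambda>T. T(c := 0)"])
    show "\<forall>T\<in>{T. syt (mu[i := mu ! i - 1]) T}. T(c := sum_list mu, c := 0) = T"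
      using syt_outside[OF _ c_out] by fastforce
    show "\<forall>T\<in>{T. syt mu T \<and> T c = sum_list mu}. T(c := 0, c := sum_list mu) = T"
      by auto
    show "(\<lambda>T. T(c := sum_list mu)) ` {T. syt (mu[i := mu ! i - 1]) T}
            \<subseteq> {T. syt mu T \<and> T c = sum_list mu}"
      using syt_add_corner[OF _ i corner] unfolding c_def by (intro image_subsetI) simp
    show "(\<lambda>T. T(c := 0)) ` {T. syt mu T \<and> T c = sum_list mu} \<subseteq> {T. syt (mu[i := mu ! i - 1]) T}"
      using syt_remove_last_cell[OF _ i] unfolding c_def by (intro image_subsetI) simp
  qed
  then have "card {T. syt (mu[i := mu ! i - 1]) T} = card {T. syt mu T \<and> T c = sum_list mu}"
    by (rule bij_betw_same_card)
  then show ?thesis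
    unfolding num_syt_def c_def by (rule sym)
qed

lemma card_syt_max_not_corner:
  assumes "(i, Suc j) \<in> young_diagram mu \<or> (Suc i, j) \<in> young_diagram mu"
  shows "card {T. syt mu T \<and> T (i, j) = sum_list mu} = 0"
proof -
  have no_max: "{T. syt mu T \<and> T (i, j) = sum_list mu} = {}"
    using assms syt_max_at_corner[of mu _ i j] by blast
  show ?thesis
    unfolding no_max by (rule card.empty)
qed

lemma num_syt_sum_max_cells:
  assumes "1 \<le> sum_list mu"
  shows "num_syt mu = (\<Sum>c\<in>young_diagram mu. card {T. syt mu T \<and> T c = sum_list mu})"
proof -
  define S where "S c = {T. syt mu T \<and> T c = sum_list mu}" for c
  have "{T. syt mu T} = (\<Union>c\<in>young_diagram mu. S c)"
  proof (intro equalityI subsetI)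
    fix T assume "T \<in> {T. syt mu T}"
    then have "syt mu T" by simp
    then have "sum_list mu \<in> T ` young_diagram mu"
      using assms unfolding syt_def bij_betw_def by simp
    then obtain c where "c \<in> young_diagram mu" "T c = sum_list mu"
      by (metis imageE)
    then show "T \<in> (\<Union>c\<in>young_diagram mu. S c)"
      using \<open>syt mu T\<close> unfolding S_def by blast
  next
    show "T \<in> {T. syt mu T}" if "T \<in> (\<Union>c\<in>young_diagram mu. S c)" for T
      using that unfolding S_def by blast
  qed
  then have "num_syt mu = card (\<Union>c\<in>young_diagram mu. S c)"
    unfolding num_syt_def by (rule arg_cong)
  also have "\<dots> = (\<Sum>c\<in>young_diagram mu. card (S c))"
  proof (rule card_UN_disjoint[OF finite_young_diagram])
    have "S c \<subseteq> {T. syt mu T}" for c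
      unfolding S_def by blast
    then show "\<forall>c\<in>young_diagram mu. finite (S c)"
      using finite_subset finite_syt by metis
    have "c = d" if "c \<in> young_diagram mu" "d \<in> young_diagram mu" "T \<in> S c" "T \<in> S d" for c d T
      using that inj_onD[of T "young_diagram mu" c d] unfolding S_def syt_def bij_betw_def by simp
    then show "\<forall>c\<in>young_diagram mu. \<forall>d\<in>young_diagram mu. c \<noteq> d \<longrightarrow> S c \<inter> S d = {}"
      by blast
  qed
  finally show ?thesis
    unfolding S_def .
qed

lemma num_syt_branching:
  assumes "1 \<le> sum_list mu"
  shows "num_syt mu = (\<Sum>i<length mu.
           if 0 < mu ! i \<and> (Suc i, mu ! i - 1) \<notin> young_diagram mu
           then num_syt (mu[i := mu ! i - 1]) else 0)"
proof -
  define S where "S c = card {T. syt mu T \<and> T c = sum_list mu}" for c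
  have row: "(\<Sum>j<mu ! i. S (i, j)) =
      (if 0 < mu ! i \<and> (Suc i, mu ! i - 1) \<notin> young_diagram mu
       then num_syt (mu[i := mu ! i - 1]) else 0)" if i: "i < length mu" for i
  proof (cases "mu ! i")
    case 0
    then show ?thesis by simp
  next
    case (Suc m)
    have "S (i, j) = 0" if "j < m" for j
      unfolding S_def using that i Suc
      by (intro card_syt_max_not_corner) (simp add: young_diagram_iff)
    moreover have "S (i, m) = (if (Suc i, m) \<notin> young_diagram mu then num_syt (mu[i := m]) else 0)"
      unfolding S_def using card_syt_max_at_corner[OF i] card_syt_max_not_corner[of i m] Suc
      by simp
    ultimately show ?thesis
      using Suc by simp
  qed
  have "young_diagram mu = Sigma {..<length mu} (\<lambda>i. {..<mu ! i})"
    by (auto simp: young_diagram_iff)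
  then have "num_syt mu = (\<Sum>i<length mu. \<Sum>j<mu ! i. S (i, j))"
    using num_syt_sum_max_cells[OF assms] unfolding S_def by (simp add: sum.Sigma)
  also have "\<dots> = (\<Sum>i<length mu.
           if 0 < mu ! i \<and> (Suc i, mu ! i - 1) \<notin> young_diagram mu
           then num_syt (mu[i := mu ! i - 1]) else 0)"
    using row by (intro sum.cong) simp_all
  finally show ?thesis .
qed

lemma num_syt_empty:
  assumes "sum_list mu = 0"
  shows "num_syt mu = 1"
proof -
  have "mu ! i = 0" if "i < length mu" for i
    using elem_le_sum_list[OF that] unfolding assms by simp
  then have "young_diagram mu = {}"
    unfolding young_diagram_def by auto
  then have "syt mu T \<longleftrightarrow> T = (\<lambda>_. 0)" for T
    unfolding syt_def assms by (auto simp: fun_eq_iff bij_betw_def)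
  then have "{T. syt mu T} = {\<lambda>_. 0}"
    by blast
  then show ?thesis
    unfolding num_syt_def by simp
qed

lemma num_syt_append_zero: "num_syt (mu @ [0]) = num_syt mu"
proof -
  have "young_diagram (mu @ [0]) = young_diagram mu"
    unfolding young_diagram_def by (auto simp: nth_append less_Suc_eq split: if_splits)
  then show ?thesis
    unfolding num_syt_def syt_def by simp
qed

lemma num_syt_one_row: "num_syt [a] = 1"
proof (induction a)
  case 0
  then show ?case by (simp add: num_syt_empty)
next
  case (Suc a)
  have "num_syt [Suc a] = num_syt [a]"
    using num_syt_branching[of "[Suc a]"] by (simp add: young_diagram_iff)
  then show ?case
    using Suc.IH by simp
qed

lemma num_syt_two_rows_column_rec:
  assumes b: "1 \<le> b" "b \<le> a"
  shows "num_syt ([a, b] @ replicate j 1) =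
     (if b < a then num_syt ([a - 1, b] @ replicate j 1) else 0)
   + (if 2 \<le> b \<or> j = 0 then num_syt ([a, b - 1] @ replicate j 1) else 0)
   + (if 1 \<le> j then num_syt ([a, b] @ replicate (j - 1) 1) else 0)"
proof -
  define mu where "mu = [a, b] @ replicate j 1"
  define f where "f i = (if 0 < mu ! i \<and> (Suc i, mu ! i - 1) \<notin> young_diagram mu
            then num_syt (mu[i := mu ! i - 1]) else 0)" for i
  have "num_syt mu = (\<Sum>i<Suc (Suc j). f i)"
    using num_syt_branching[of mu] b unfolding f_def mu_def by simp
  also have "\<dots> = f 0 + f 1 + (\<Sum>i<j. f (Suc (Suc i)))"
    by (simp only: sum.lessThan_Suc_shift) simp
  also have "f 0 = (if b < a then num_syt ([a - 1, b] @ replicate j 1) else 0)"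
    using b unfolding f_def mu_def by (auto simp: young_diagram_iff)
  also have "f 1 = (if 2 \<le> b \<or> j = 0 then num_syt ([a, b - 1] @ replicate j 1) else 0)"
    using b unfolding f_def mu_def by (auto simp: young_diagram_iff nth_append)
  also have "(\<Sum>i<j. f (Suc (Suc i))) = (if 1 \<le> j then num_syt ([a, b] @ replicate (j - 1) 1) else 0)"
  proof (cases j)
    case 0
    then show ?thesis by simp
  next
    case (Suc j')
    have "f (Suc (Suc i)) = 0" if "i < j'" for i
    proof -
      have "mu ! Suc (Suc i) = 1" "mu ! Suc (Suc (Suc i)) = 1" "Suc (Suc (Suc i)) < length mu"
        using that Suc unfolding mu_def by (auto simp: nth_Cons')
      then show ?thesis
        unfolding f_def by (simp add: young_diagram_iff)
    qed
    moreover have "mu[Suc (Suc j') := 0] = ([a, b] @ replicate j' 1) @ [0]"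
      unfolding mu_def Suc by (simp add: replicate_append_same[symmetric] list_update_append)
    moreover have "mu ! Suc (Suc j') = 1" "length mu = Suc (Suc (Suc j'))"
      using Suc unfolding mu_def by (auto simp: nth_Cons')
    ultimately show ?thesis
      using Suc num_syt_append_zero[of "[a, b] @ replicate j' 1"]
      unfolding f_def by (simp add: young_diagram_iff)
  qed
  finally show ?thesis
    unfolding mu_def .
qed

definition shape_syt :: "nat \<Rightarrow> nat \<Rightarrow> nat \<Rightarrow> nat" where
  "shape_syt m h b =
     (if 1 \<le> b \<and> 2 * b + h \<le> m then num_syt ([b + h, b] @ replicate (m - h - 2 * b) 1) else 0)"

definition shape_syt_sum :: "nat \<Rightarrow> nat \<Rightarrow> nat" where
  "shape_syt_sum m h = (\<Sum>b<m. shape_syt m h (Suc b))"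

lemma shape_syt_eq:
  assumes "1 \<le> b" "2 * b + h + j = m"
  shows "shape_syt m h b = num_syt ([b + h, b] @ replicate j 1)"
proof -
  have "2 * b + h \<le> m" "m - h - 2 * b = j"
    using assms(2) by linarith+
  then show ?thesis
    unfolding shape_syt_def using assms(1) by simp
qed

lemma shape_syt_rec:
  assumes "1 \<le> b"
  shows "shape_syt (Suc m) h b =
           (if 0 < h then shape_syt m (h - 1) b else 0)
         + (if 2 \<le> b then shape_syt m (Suc h) (b - 1) else 0)
         + (if b = 1 \<and> m = Suc h then 1 else 0)
         + shape_syt m h b"
proof (cases "2 * b + h \<le> Suc m")
  case False
  then show ?thesis
    unfolding shape_syt_def by auto
next
  case True
  define j where "j = Suc m - h - 2 * b"
  have j: "2 * b + h + j = Suc m"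
    using True unfolding j_def by linarith
  have "shape_syt (Suc m) h b = num_syt ([b + h, b] @ replicate j 1)"
    by (rule shape_syt_eq[OF assms j])
  also have "\<dots> =
       (if b < b + h then num_syt ([b + h - 1, b] @ replicate j 1) else 0)
     + (if 2 \<le> b \<or> j = 0 then num_syt ([b + h, b - 1] @ replicate j 1) else 0)
     + (if 1 \<le> j then num_syt ([b + h, b] @ replicate (j - 1) 1) else 0)"
    using assms by (intro num_syt_two_rows_column_rec) auto
  also have "(if b < b + h then num_syt ([b + h - 1, b] @ replicate j 1) else 0) =
      (if 0 < h then shape_syt m (h - 1) b else 0)"
    using assms j shape_syt_eq[of b "h - 1" j m] by (auto simp: add.commute)
  also have "(if 2 \<le> b \<or> j = 0 then num_syt ([b + h, b - 1] @ replicate j 1) else 0) =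
      (if 2 \<le> b then shape_syt m (Suc h) (b - 1) else 0) + (if b = 1 \<and> m = Suc h then 1 else 0)"
    using assms j shape_syt_eq[of "b - 1" "Suc h" j m]
      num_syt_append_zero[of "[Suc h]"] num_syt_one_row[of "Suc h"] by auto
  also have "(if 1 \<le> j then num_syt ([b + h, b] @ replicate (j - 1) 1) else 0) = shape_syt m h b"
    using assms j shape_syt_eq[of b h "j - 1" m] unfolding shape_syt_def by auto
  finally show ?thesis
    by (simp only: add.assoc)
qed

lemma shape_syt_sum_rec:
  "shape_syt_sum (Suc m) h =
     (if 0 < h then shape_syt_sum m (h - 1) else 0) + shape_syt_sum m (Suc h)
   + (if m = Suc h then 1 else 0) + shape_syt_sum m h"
proof -
  have vanish: "shape_syt m h' (Suc m) = 0" for h'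
    unfolding shape_syt_def by simp
  have "shape_syt_sum (Suc m) h =
      (\<Sum>b<Suc m. (if 0 < h then shape_syt m (h - 1) (Suc b) else 0))
    + (\<Sum>b<Suc m. (if 2 \<le> Suc b then shape_syt m (Suc h) b else 0))
    + (\<Sum>b<Suc m. (if Suc b = 1 \<and> m = Suc h then 1 else 0))
    + (\<Sum>b<Suc m. shape_syt m h (Suc b))"
    unfolding shape_syt_sum_def sum.distrib[symmetric] by (intro sum.cong) (simp_all add: shape_syt_rec)
  also have "(\<Sum>b<Suc m. (if 0 < h then shape_syt m (h - 1) (Suc b) else 0)) =
      (if 0 < h then shape_syt_sum m (h - 1) else 0)"
    unfolding shape_syt_sum_def by (simp add: vanish)
  also have "(\<Sum>b<Suc m. (if 2 \<le> Suc b then shape_syt m (Suc h) b else 0)) = shape_syt_sum m (Suc h)"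
    unfolding shape_syt_sum_def by (simp only: sum.lessThan_Suc_shift) simp
  also have "(\<Sum>b<Suc m. (if Suc b = 1 \<and> m = Suc h then 1 else 0)) = (if m = Suc h then 1 else 0)"
    by (simp only: sum.lessThan_Suc_shift) simp
  also have "(\<Sum>b<Suc m. shape_syt m h (Suc b)) = shape_syt_sum m h"
    unfolding shape_syt_sum_def by (simp add: vanish)
  finally show ?thesis .
qed

fun riordan_from :: "nat \<Rightarrow> step list \<Rightarrow> bool" where
  "riordan_from h [] \<longleftrightarrow> h = 0"
| "riordan_from h (U # p) \<longleftrightarrow> riordan_from (Suc h) p"
| "riordan_from h (F # p) \<longleftrightarrow> 0 < h \<and> riordan_from h p"
| "riordan_from h (D # p) \<longleftrightarrow> 0 < h \<and> riordan_from (h - 1) p"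

lemma height_0 [simp]: "height p 0 = 0"
  unfolding height_def by simp

lemma height_Cons_Suc [simp]: "height (x # p) (Suc i) = step_val x + height p i"
  unfolding height_def sum.lessThan_Suc_shift by simp

lemma All_le_Suc2: "(\<forall>i\<le>Suc n. P i) \<longleftrightarrow> P 0 \<and> (\<forall>i\<le>n. P (Suc i))"
  unfolding le_simps(2)[symmetric] All_less_Suc2 ..

lemma riordan_from_iff_heights:
  "riordan_from h p \<longleftrightarrow>
     (\<forall>i\<le>length p. 0 \<le> int h + height p i) \<and> int h + height p (length p) = 0 \<and>
     (\<forall>i<length p. p ! i = F \<longrightarrow> int h + height p i \<noteq> 0)"
proof (induction p arbitrary: h)
  case Nil
  then show ?case by simp
next
  case (Cons x p)
  show ?case
  proof (cases x)
    case U
    then show ?thesis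
      using Cons.IH[of "Suc h"] by (simp add: All_le_Suc2 All_less_Suc2 ac_simps)
  next
    case F
    then show ?thesis
      using Cons.IH[of h] by (auto simp: All_le_Suc2 All_less_Suc2)
  next
    case D
    show ?thesis
    proof (cases h)
      case 0
      then show ?thesis
        using D by (auto simp: All_le_Suc2 intro!: exI[of _ 0])
    next
      case (Suc h')
      then have "int h + step_val x = int h'"
        using D by simp
      then show ?thesis
        using Cons.IH[of h'] D Suc by (simp add: All_le_Suc2 All_less_Suc2 add.assoc[symmetric])
    qed
  qed
qed

lemma riordan_path_iff_riordan_from: "riordan_path p \<longleftrightarrow> riordan_from 0 p"
  unfolding riordan_path_def motzkin_path_def riordan_from_iff_heights by simp

definition riordan_paths_from :: "nat \<Rightarrow> nat \<Rightarrow> step list set" where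
  "riordan_paths_from m h = {p. length p = m \<and> riordan_from h p}"

lemma finite_riordan_paths_from: "finite (riordan_paths_from m h)"
proof (rule finite_subset)
  show "riordan_paths_from m h \<subseteq> {p. set p \<subseteq> UNIV \<and> length p = m}"
    unfolding riordan_paths_from_def by blast
  have "(UNIV :: step set) = {U, F, D}"
    using step.exhaust by auto
  then have "finite (UNIV :: step set)"
    by (metis finite.emptyI finite_insert)
  then show "finite {p :: step list. set p \<subseteq> UNIV \<and> length p = m}"
    by (rule finite_lists_length_eq)
qed

lemma card_riordan_paths_from_0: "card (riordan_paths_from 0 h) = (if h = 0 then 1 else 0)"
proof -
  have "riordan_paths_from 0 h = (if h = 0 then {[]} else {})"
    unfolding riordan_paths_from_def by auto
  then show ?thesis by simp
qed

lemma card_riordan_paths_from_Suc: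
  "card (riordan_paths_from (Suc m) h) =
     card (riordan_paths_from m (Suc h))
   + (if 0 < h then card (riordan_paths_from m h) + card (riordan_paths_from m (h - 1)) else 0)"
proof -
  let ?A = "riordan_paths_from m"
  have split: "riordan_paths_from (Suc m) h =
      Cons U ` ?A (Suc h) \<union> (if 0 < h then Cons F ` ?A h \<union> Cons D ` ?A (h - 1) else {})"
  proof (intro equalityI subsetI)
    fix p assume "p \<in> riordan_paths_from (Suc m) h"
    then obtain x q where "p = x # q" "length q = m" "riordan_from h (x # q)"
      unfolding riordan_paths_from_def by (auto simp: length_Suc_conv)
    then show "p \<in> Cons U ` ?A (Suc h) \<union> (if 0 < h then Cons F ` ?A h \<union> Cons D ` ?A (h - 1) else {})"
      unfolding riordan_paths_from_def by (cases x) auto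
  qed (auto simp: riordan_paths_from_def split: if_splits)
  have card_Cons: "card (Cons x ` ?A k) = card (?A k)" for x k
    by (rule card_image) simp
  show ?thesis
  proof (cases "0 < h")
    case False
    then show ?thesis
      unfolding split using card_Cons by simp
  next
    case True
    have "card (riordan_paths_from (Suc m) h) =
        card (Cons U ` ?A (Suc h)) + card (Cons F ` ?A h \<union> Cons D ` ?A (h - 1))"
      unfolding split using True finite_riordan_paths_from by (simp, intro card_Un_disjoint) auto
    also have "card (Cons F ` ?A h \<union> Cons D ` ?A (h - 1)) = card (Cons F ` ?A h) + card (Cons D ` ?A (h - 1))"
      using finite_riordan_paths_from by (intro card_Un_disjoint) auto
    finally show ?thesis
      using True card_Cons by simp
  qed
qed

lemma card_riordan_paths_from:
  "card (riordan_paths_from m h) =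
     (if m = h then 1 else 0) + shape_syt_sum m h + (if 0 < h then shape_syt_sum m (h - 1) else 0)"
proof (induction m arbitrary: h)
  case 0
  then show ?case
    by (simp add: card_riordan_paths_from_0 shape_syt_sum_def)
next
  case (Suc m)
  show ?case
  proof (cases h)
    case 0
    then show ?thesis
      using Suc.IH[of 1] by (simp add: card_riordan_paths_from_Suc shape_syt_sum_rec)
  next
    case (Suc h')
    then show ?thesis
      using Suc.IH[of "Suc (Suc h')"] Suc.IH[of "Suc h'"] Suc.IH[of h']
      by (cases h') (auto simp: card_riordan_paths_from_Suc shape_syt_sum_rec)
  qed
qed

theorem corollary1p3:
  fixes n :: nat
  assumes "n \<ge> 1"
  shows "riordan_num n = (\<Sum>k=1..n div 2. num_syt ([k, k] @ replicate (n - 2*k) 1))"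
proof -
  have "riordan_num n = card (riordan_paths_from n 0)"
    unfolding riordan_num_def riordan_paths_from_def riordan_path_iff_riordan_from ..
  also have "\<dots> = shape_syt_sum n 0"
    using assms by (simp add: card_riordan_paths_from)
  also have "\<dots> = (\<Sum>k=1..n. shape_syt n 0 k)"
    unfolding shape_syt_sum_def by (simp add: sum.atLeast1_atMost_eq)
  also have "\<dots> = (\<Sum>k=1..n div 2. shape_syt n 0 k)"
    by (rule sum.mono_neutral_right) (auto simp: shape_syt_def)
  also have "\<dots> = (\<Sum>k=1..n div 2. num_syt ([k, k] @ replicate (n - 2*k) 1))"
    by (rule sum.cong) (auto simp: shape_syt_def)
  finally show ?thesis .
qed

end
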